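(* Let $A,B\in\mathcal{S}_n$ and $x\in\mathbb{R}^n$. There exists a maximal lower bound $C$ of $A$ and $B$ in the Löwner order such that $Ax=Cx$ if and only if $x^TAx<x^TBx$ or $Ax=Bx$.
   Context: $\mathcal{S}_n$ is the set of real symmetric $n\times n$ matrices. Löwner order: $X\preceq Y$ iff $y^TXy\le y^TYy$ for all $y$. A maximal lower bound of $A,B$ is a $C\in\mathcal{S}_n$ with $C\preceq A$, $C\preceq B$ such that no $C'\ne C$ with $C\preceq C'$ satisfies $C'\preceq A$, $C'\preceq B$. *)

theory Defs
  imports "HOL-Analysis.Analysis"
begin

definition symmetric_matrix :: "real^'n^'n \<Rightarrow> bool" where
  "symmetric_matrix M \<longleftrightarrow> transpose M = M"

definition loewner_le :: "real^'n^'n \<Rightarrow> real^'n^'n \<Rightarrow> bool" where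
  "loewner_le X Y \<longleftrightarrow> (\<forall>y. y \<bullet> (X *v y) \<le> y \<bullet> (Y *v y))"

definition maximal_lower_bound :: "real^'n^'n \<Rightarrow> real^'n^'n \<Rightarrow> real^'n^'n \<Rightarrow> bool" where
  "maximal_lower_bound A B C \<longleftrightarrow>
     symmetric_matrix C \<and> loewner_le C A \<and> loewner_le C B \<and>
     (\<forall>C'. symmetric_matrix C' \<and> loewner_le C C' \<and> loewner_le C' A \<and> loewner_le C' B
           \<longrightarrow> C' = C)"

end

(*
  If C is a lower bound with C x = A x and x^T A x = x^T B x, then B - C is positive
  semidefinite and its quadratic form vanishes at x, so (B - C) x = 0, i.e. A x = B x.

  Conversely, put N = B - A. The condition x^T N x > 0 or N x = 0 is exactly what makes
  N + t P positive semidefinite for large t, where P is the orthogonal projection onto the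
  complement of x. Then C0 = A - t P is a lower bound of A and B with C0 x = A x. The lower
  bounds above C0 form a compact set (its elements satisfy norm (C - C0) <= trace (A - C0)),
  so one of them, C, has maximal trace; C is a maximal lower bound, since a positive
  semidefinite matrix of trace 0 vanishes. Finally C0 <= C <= A squeezes x^T C x to x^T A x,
  which again forces C x = A x.
*)
theory Submission
  imports Defs
begin

lemma transpose_diff: "transpose (A - B) = transpose A - transpose (B :: 'a::ab_group_add^'n^'m)"
  by (simp add: transpose_def vec_eq_iff)

lemma symmetric_matrix_diff:
  "symmetric_matrix A \<Longrightarrow> symmetric_matrix B \<Longrightarrow> symmetric_matrix (A - B)"
  by (simp add: symmetric_matrix_def transpose_diff)

lemma symmetric_matrix_scaleR: "symmetric_matrix A \<Longrightarrow> symmetric_matrix (c *\<^sub>R A)"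
  by (simp add: symmetric_matrix_def transpose_scalar)

lemma symmetric_inner_mv_commute:
  assumes "symmetric_matrix D"
  shows "u \<bullet> (D *v v) = v \<bullet> (D *v u)"
  by (metis assms dot_lmul_matrix inner_commute symmetric_matrix_def vector_transpose_matrix)

lemma matrix_entry_eq_inner: "(C::real^'n^'n) $ i $ j = axis i 1 \<bullet> (C *v axis j 1)"
  by (simp add: inner_axis' matrix_vector_mul_component inner_axis)

lemma loewner_le_0_iff: "loewner_le 0 D \<longleftrightarrow> (\<forall>y. 0 \<le> y \<bullet> (D *v y))"
  by (simp add: loewner_le_def)

lemma loewner_le_0_diff_iff: "loewner_le 0 (C' - C) \<longleftrightarrow> loewner_le C C'"
  by (simp add: loewner_le_def matrix_vector_mult_diff_rdistrib inner_diff_right)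

lemma loewner_le_refl: "loewner_le X X"
  by (simp add: loewner_le_def)

lemma loewner_le_trans: "loewner_le X Y \<Longrightarrow> loewner_le Y Z \<Longrightarrow> loewner_le X Z"
  unfolding loewner_le_def by (meson order_trans)

lemma nonneg_quadratic_imp_square_le:
  fixes a b c :: real
  assumes "0 \<le> c" and nonneg: "\<And>t. 0 \<le> a + 2 * b * t + c * t\<^sup>2"
  shows "b\<^sup>2 \<le> a * c"
proof (cases "c = 0")
  case True
  have "b = 0"
  proof (rule ccontr)
    assume "b \<noteq> 0"
    then show False
      using nonneg[of "- (a + 1) / (2 * b)"] True by (simp add: field_simps)
  qed
  then show ?thesis using True by simp
next
  case False
  have "0 \<le> a + 2 * b * (- b / c) + c * (- b / c)\<^sup>2" by (rule nonneg)
  also have "\<dots> = a - b\<^sup>2 / c" using False by (simp add: field_simps power2_eq_square)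
  finally have "b\<^sup>2 / c \<le> a" by simp
  moreover have "0 < c" using \<open>0 \<le> c\<close> False by simp
  ultimately show ?thesis by (simp add: divide_le_eq mult.commute)
qed

lemma psd_Cauchy_Schwarz:
  fixes D :: "real^'n^'n"
  assumes sym: "symmetric_matrix D" and psd: "loewner_le 0 D"
  shows "(u \<bullet> (D *v v))\<^sup>2 \<le> (u \<bullet> (D *v u)) * (v \<bullet> (D *v v))"
proof (rule nonneg_quadratic_imp_square_le)
  show "0 \<le> v \<bullet> (D *v v)" using psd by (simp add: loewner_le_0_iff)
  fix t
  have "0 \<le> (u + t *\<^sub>R v) \<bullet> (D *v (u + t *\<^sub>R v))" using psd by (simp add: loewner_le_0_iff)
  also have "\<dots> = u \<bullet> (D *v u) + 2 * (u \<bullet> (D *v v)) * t + (v \<bullet> (D *v v)) * t\<^sup>2"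
    using symmetric_inner_mv_commute[OF sym, of u v]
    by (simp add: matrix_vector_right_distrib matrix_vector_mult_scaleR inner_add_left
        inner_add_right power2_eq_square algebra_simps)
  finally show "0 \<le> u \<bullet> (D *v u) + 2 * (u \<bullet> (D *v v)) * t + (v \<bullet> (D *v v)) * t\<^sup>2" .
qed

lemma psd_mv_eq_0_if_quadratic_form_eq_0:
  fixes D :: "real^'n^'n"
  assumes "symmetric_matrix D" and "loewner_le 0 D" and "x \<bullet> (D *v x) = 0"
  shows "D *v x = 0"
  using psd_Cauchy_Schwarz[OF assms(1,2), of "D *v x" x] assms(3) by simp

lemma loewner_le_mv_eq_if_quadratic_form_eq:
  fixes C A :: "real^'n^'n"
  assumes "symmetric_matrix C" "symmetric_matrix A" "loewner_le C A"
    and "x \<bullet> (C *v x) = x \<bullet> (A *v x)"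
  shows "C *v x = A *v x"
proof -
  have "(A - C) *v x = 0"
    using assms by (intro psd_mv_eq_0_if_quadratic_form_eq_0)
      (auto simp: symmetric_matrix_diff loewner_le_0_diff_iff
        matrix_vector_mult_diff_rdistrib inner_diff_right)
  then show ?thesis by (simp add: matrix_vector_mult_diff_rdistrib)
qed

lemma trace_eq_sum_quadratic_form: "trace (D::real^'n^'n) = (\<Sum>i\<in>UNIV. axis i 1 \<bullet> (D *v axis i 1))"
  by (simp add: trace_def matrix_entry_eq_inner)

lemma trace_mono_loewner: "loewner_le X Y \<Longrightarrow> trace X \<le> trace Y"
  unfolding trace_eq_sum_quadratic_form loewner_le_def by (intro sum_mono) blast

lemma psd_norm_le_trace:
  fixes D :: "real^'n^'n"
  assumes sym: "symmetric_matrix D" and psd: "loewner_le 0 D"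
  shows "norm D \<le> trace D"
proof -
  have "(norm D)\<^sup>2 = (\<Sum>i\<in>UNIV. \<Sum>j\<in>UNIV. (D $ i $ j)\<^sup>2)"
    unfolding power2_norm_eq_inner inner_vec_def by (simp add: power2_eq_square)
  also have "\<dots> \<le> (\<Sum>i\<in>UNIV. \<Sum>j\<in>UNIV. D $ i $ i * D $ j $ j)"
    unfolding matrix_entry_eq_inner by (intro sum_mono psd_Cauchy_Schwarz[OF sym psd])
  also have "\<dots> = (trace D)\<^sup>2"
    by (simp add: trace_def power2_eq_square sum_product)
  finally have "(norm D)\<^sup>2 \<le> (trace D)\<^sup>2" .
  moreover have "0 \<le> trace D" using trace_mono_loewner[OF psd] by (simp add: trace_def)
  ultimately show ?thesis by (rule power2_le_imp_le)
qed

lemma loewner_le_trace_le_imp_eq: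
  fixes C C' :: "real^'n^'n"
  assumes "symmetric_matrix C" "symmetric_matrix C'" "loewner_le C C'" and "trace C' \<le> trace C"
  shows "C' = C"
proof -
  have "norm (C' - C) \<le> trace (C' - C)"
    using assms by (intro psd_norm_le_trace) (simp_all add: symmetric_matrix_diff loewner_le_0_diff_iff)
  then have "norm (C' - C) \<le> 0" using assms(4) trace_sub[of C' C] by linarith
  then show ?thesis by simp
qed

lemma continuous_on_quadratic_form: "continuous_on S (\<lambda>C::real^'n^'n. y \<bullet> (C *v y))"
proof -
  have "linear (\<lambda>C::real^'n^'n. C *v y)"
    by (rule linearI) (simp_all add: matrix_vector_mult_add_rdistrib scaleR_matrix_vector_assoc)
  then show ?thesis
    by (intro continuous_on_inner continuous_on_const linear_continuous_on linear_conv_bounded_linear[THEN iffD1])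
qed

lemma closed_symmetric_matrices: "closed {C::real^'n^'n. symmetric_matrix C}"
proof -
  have "linear (transpose :: real^'n^'n \<Rightarrow> real^'n^'n)"
    by (rule linearI) (simp_all add: transpose_def vec_eq_iff)
  then show ?thesis
    unfolding symmetric_matrix_def
    by (intro closed_Collect_eq continuous_on_id linear_continuous_on linear_conv_bounded_linear[THEN iffD1])
qed

lemma closed_loewner_le_below: "closed {C. loewner_le C M}"
  unfolding loewner_le_def
  by (intro closed_Collect_all closed_Collect_le continuous_on_quadratic_form continuous_on_const)

lemma closed_loewner_le_above: "closed {C. loewner_le M C}"
  unfolding loewner_le_def
  by (intro closed_Collect_all closed_Collect_le continuous_on_quadratic_form continuous_on_const)

lemma bounded_loewner_interval:
  fixes L U :: "real^'n^'n"
  assumes "symmetric_matrix L"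
  shows "bounded {C. symmetric_matrix C \<and> loewner_le L C \<and> loewner_le C U}"
proof (rule bounded_subset[OF bounded_cball])
  show "{C. symmetric_matrix C \<and> loewner_le L C \<and> loewner_le C U} \<subseteq> cball L (trace (U - L))"
  proof safe
    fix C assume C: "symmetric_matrix C" "loewner_le L C" "loewner_le C U"
    have "norm (C - L) \<le> trace (C - L)"
      using C assms by (intro psd_norm_le_trace) (simp_all add: symmetric_matrix_diff loewner_le_0_diff_iff)
    also have "\<dots> \<le> trace (U - L)"
      using trace_mono_loewner[OF C(3)] by (simp add: trace_sub)
    finally show "C \<in> cball L (trace (U - L))" by (simp add: dist_norm norm_minus_commute)
  qed
qed

lemma continuous_on_trace: "continuous_on S (trace :: real^'n^'n \<Rightarrow> real)"
  unfolding trace_def by (intro continuous_on_sum continuous_on_component continuous_on_id)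

lemma exists_maximal_lower_bound_above:
  fixes A B C0 :: "real^'n^'n"
  assumes "symmetric_matrix C0" "loewner_le C0 A" "loewner_le C0 B"
  obtains C where "maximal_lower_bound A B C" "loewner_le C0 C"
proof -
  define T where "T = {C. symmetric_matrix C \<and> loewner_le C0 C \<and> loewner_le C A \<and> loewner_le C B}"
  have "T \<subseteq> {C. symmetric_matrix C \<and> loewner_le C0 C \<and> loewner_le C A}"
    by (auto simp: T_def)
  then have "bounded T"
    using bounded_loewner_interval[OF assms(1)] by (rule bounded_subset[rotated])
  moreover have "closed T"
    unfolding T_def Collect_conj_eq
    by (intro closed_Int closed_symmetric_matrices closed_loewner_le_below closed_loewner_le_above)
  ultimately have "compact T" by (simp add: compact_eq_bounded_closed)
  moreover have "C0 \<in> T" using assms by (simp add: T_def loewner_le_refl)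
  ultimately obtain C where "C \<in> T" and trace_max: "\<forall>C'\<in>T. trace C' \<le> trace C"
    using continuous_attains_sup[OF _ _ continuous_on_trace] by blast
  then have C: "symmetric_matrix C" "loewner_le C0 C" "loewner_le C A" "loewner_le C B"
    by (simp_all add: T_def)
  have "maximal_lower_bound A B C"
    unfolding maximal_lower_bound_def
  proof (intro conjI C(1,3,4) allI impI, elim conjE)
    fix C' assume C': "symmetric_matrix C'" "loewner_le C C'" "loewner_le C' A" "loewner_le C' B"
    then have "C' \<in> T" using loewner_le_trans[OF C(2)] by (simp add: T_def)
    then have "trace C' \<le> trace C" using trace_max by blast
    then show "C' = C" by (rule loewner_le_trace_le_imp_eq[OF C(1) C'(1,2)])
  qed
  then show ?thesis using C(2) by (rule that)
qed

lemma projection_matrix_orthogonal_complement: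
  fixes x :: "real^'n"
  obtains P :: "real^'n^'n"
  where "symmetric_matrix P" "P *v x = 0" "\<And>y. y \<bullet> (P *v y) = (P *v y) \<bullet> (P *v y)"
    "\<And>y. \<exists>a. a *\<^sub>R x + P *v y = y"
proof
  define Q :: "real^'n^'n" where "Q = (\<chi> i j. x $ i * x $ j)"
  define P where "P = mat 1 - (1 / (x \<bullet> x)) *\<^sub>R Q"
  have "Q *v y = (x \<bullet> y) *\<^sub>R x" for y
    by (simp add: Q_def matrix_vector_mult_def inner_vec_def vec_eq_iff sum_distrib_left mult_ac)
  then have Pv: "P *v y = y - ((x \<bullet> y) / (x \<bullet> x)) *\<^sub>R x" for y
    by (simp add: P_def matrix_vector_mult_diff_rdistrib scaleR_matrix_vector_assoc[symmetric])
  have "transpose Q = Q" by (simp add: Q_def transpose_def vec_eq_iff mult.commute)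
  then show "symmetric_matrix P"
    by (simp add: symmetric_matrix_def P_def transpose_diff transpose_scalar)
  show "P *v x = 0" by (cases "x = 0") (simp_all add: Pv)
  show decomp: "\<exists>a. a *\<^sub>R x + P *v y = y" for y by (simp add: Pv)
  show "y \<bullet> (P *v y) = (P *v y) \<bullet> (P *v y)" for y
  proof -
    have "x \<bullet> (P *v y) = 0" by (cases "x = 0") (simp_all add: Pv inner_diff_right)
    then have "(a *\<^sub>R x + P *v y) \<bullet> (P *v y) = (P *v y) \<bullet> (P *v y)" for a
      by (simp add: inner_add_left)
    moreover obtain a where "a *\<^sub>R x + P *v y = y" using decomp by blast
    ultimately show ?thesis by metis
  qed
qed

lemma quadratic_form_bounded_below_off_line:
  fixes N :: "real^'n^'n" and x :: "real^'n"
  assumes sym: "symmetric_matrix N" and pos: "0 < x \<bullet> (N *v x) \<or> N *v x = 0"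
  obtains lam where "0 \<le> lam" "\<And>a z. 0 \<le> (a *\<^sub>R x + z) \<bullet> (N *v (a *\<^sub>R x + z)) + lam * (z \<bullet> z)"
proof -
  obtain K where "0 < K" and K: "\<And>v. norm (N *v v) \<le> norm v * K"
    using bounded_linear.pos_bounded[OF matrix_vector_mul_bounded_linear] by blast
  have lower_K: "- K * (z \<bullet> z) \<le> z \<bullet> (N *v z)" for z
  proof -
    have "\<bar>z \<bullet> (N *v z)\<bar> \<le> norm z * (norm z * K)"
      using Cauchy_Schwarz_ineq2[of z "N *v z"] K[of z] by (meson mult_left_mono norm_ge_zero order_trans)
    then show ?thesis by (simp add: dot_square_norm power2_eq_square algebra_simps abs_le_iff)
  qed
  define c where "c = x \<bullet> (N *v x)"
  define L where "L = (N *v x) \<bullet> (N *v x)"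
  \<comment> \<open>K absorbs the term in z alone; L / c completes the square in a (for c = 0 the cross term vanishes).\<close>
  define lam where "lam = K + (if 0 < c then L / c else 0)"
  show ?thesis
  proof
    show "0 \<le> lam" using \<open>0 < K\<close> by (simp add: lam_def L_def)
    fix a z
    define w where "w = z \<bullet> (N *v x)"
    have "(a *\<^sub>R x + z) \<bullet> (N *v (a *\<^sub>R x + z)) = a\<^sup>2 * c + 2 * a * w + z \<bullet> (N *v z)"
      using symmetric_inner_mv_commute[OF sym, of x z]
      by (simp add: c_def w_def matrix_vector_right_distrib matrix_vector_mult_scaleR inner_add_left
          inner_add_right power2_eq_square algebra_simps)
    moreover have "0 \<le> a\<^sup>2 * c + 2 * a * w + (if 0 < c then L / c else 0) * (z \<bullet> z)"
    proof (cases "0 < c")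
      case True
      have "w\<^sup>2 \<le> (z \<bullet> z) * L" unfolding w_def L_def by (rule Cauchy_Schwarz_ineq)
      then have "0 \<le> (a * c + w)\<^sup>2 + ((z \<bullet> z) * L - w\<^sup>2)" by simp
      also have "\<dots> = c * (a\<^sup>2 * c + 2 * a * w + L / c * (z \<bullet> z))"
        using True by (simp add: field_simps power2_eq_square)
      finally show ?thesis using True by (simp add: zero_le_mult_iff)
    next
      case False
      then have "N *v x = 0" using pos by (simp add: c_def)
      then show ?thesis using False by (simp add: c_def w_def)
    qed
    ultimately show "0 \<le> (a *\<^sub>R x + z) \<bullet> (N *v (a *\<^sub>R x + z)) + lam * (z \<bullet> z)"
      using lower_K[of z] by (simp add: lam_def algebra_simps)
  qed
qed

lemma lower_bound_agreeing_at:
  fixes A B :: "real^'n^'n" and x :: "real^'n"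
  assumes symA: "symmetric_matrix A" and symB: "symmetric_matrix B"
    and "x \<bullet> (A *v x) < x \<bullet> (B *v x) \<or> A *v x = B *v x"
  obtains C0 where "symmetric_matrix C0" "loewner_le C0 A" "loewner_le C0 B" "C0 *v x = A *v x"
proof -
  have "0 < x \<bullet> ((B - A) *v x) \<or> (B - A) *v x = 0"
    using assms(3) by (auto simp: matrix_vector_mult_diff_rdistrib inner_diff_right)
  then obtain lam where "0 \<le> lam"
    and lam: "\<And>a z. 0 \<le> (a *\<^sub>R x + z) \<bullet> ((B - A) *v (a *\<^sub>R x + z)) + lam * (z \<bullet> z)"
    using quadratic_form_bounded_below_off_line[OF symmetric_matrix_diff[OF symB symA]] by metis
  obtain P :: "real^'n^'n" where P: "symmetric_matrix P" "P *v x = 0"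
    and P_form: "\<And>y. y \<bullet> (P *v y) = (P *v y) \<bullet> (P *v y)"
    and decomp: "\<And>y. \<exists>a. a *\<^sub>R x + P *v y = y"
    using projection_matrix_orthogonal_complement[of x] by metis
  show ?thesis
  proof (rule that[of "A - lam *\<^sub>R P"])
    show "symmetric_matrix (A - lam *\<^sub>R P)"
      by (rule symmetric_matrix_diff[OF symA symmetric_matrix_scaleR[OF P(1)]])
    show "loewner_le (A - lam *\<^sub>R P) A"
      using \<open>0 \<le> lam\<close>
      by (simp add: loewner_le_def matrix_vector_mult_diff_rdistrib scaleR_matrix_vector_assoc[symmetric]
          inner_diff_right P_form)
    show "loewner_le (A - lam *\<^sub>R P) B"
      unfolding loewner_le_def
    proof
      fix y
      obtain a where y: "a *\<^sub>R x + P *v y = y" using decomp by blast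
      have "0 \<le> y \<bullet> ((B - A) *v y) + lam * ((P *v y) \<bullet> (P *v y))"
        using lam[of a "P *v y"] unfolding y .
      then show "y \<bullet> ((A - lam *\<^sub>R P) *v y) \<le> y \<bullet> (B *v y)"
        by (simp add: matrix_vector_mult_diff_rdistrib scaleR_matrix_vector_assoc[symmetric]
            inner_diff_right P_form)
    qed
    show "(A - lam *\<^sub>R P) *v x = A *v x"
      by (simp add: matrix_vector_mult_diff_rdistrib scaleR_matrix_vector_assoc[symmetric] P(2))
  qed
qed

theorem proposition4p5:
  fixes A B :: "real^'n^'n" and x :: "real^'n"
  assumes "symmetric_matrix A" and "symmetric_matrix B"
  shows "(\<exists>C. maximal_lower_bound A B C \<and> A *v x = C *v x) \<longleftrightarrow>
         (x \<bullet> (A *v x) < x \<bullet> (B *v x) \<or> A *v x = B *v x)"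
proof
  assume "\<exists>C. maximal_lower_bound A B C \<and> A *v x = C *v x"
  then obtain C where "symmetric_matrix C" "loewner_le C B" "A *v x = C *v x"
    unfolding maximal_lower_bound_def by blast
  moreover have "x \<bullet> (C *v x) \<le> x \<bullet> (B *v x)" using \<open>loewner_le C B\<close> by (simp add: loewner_le_def)
  ultimately show "x \<bullet> (A *v x) < x \<bullet> (B *v x) \<or> A *v x = B *v x"
    using loewner_le_mv_eq_if_quadratic_form_eq[OF _ assms(2)] by force
next
  assume "x \<bullet> (A *v x) < x \<bullet> (B *v x) \<or> A *v x = B *v x"
  then obtain C0 where C0: "symmetric_matrix C0" "loewner_le C0 A" "loewner_le C0 B" "C0 *v x = A *v x"
    using lower_bound_agreeing_at[OF assms] by blast
  then obtain C where C: "maximal_lower_bound A B C" "loewner_le C0 C"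
    using exists_maximal_lower_bound_above by blast
  then have "symmetric_matrix C" "loewner_le C A" by (simp_all add: maximal_lower_bound_def)
  moreover have "x \<bullet> (C *v x) = x \<bullet> (A *v x)"
    using C(2) \<open>loewner_le C A\<close> C0(4) unfolding loewner_le_def by (metis order_antisym)
  ultimately have "C *v x = A *v x" using loewner_le_mv_eq_if_quadratic_form_eq[OF _ assms(1)] by blast
  with C(1) show "\<exists>C. maximal_lower_bound A B C \<and> A *v x = C *v x" by auto
qed

end
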